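(* Let $1<p<\infty$ and $1<q<\infty$. Then there exists a measurable function $f$ on $\mathbb{R}^2$ such that almost every $x$-section $f_x$ and almost every $y$-section $f_y$ belong to $\operatorname{Lip}\frac1p$, the functions $x\mapsto\|f_x\|_{\operatorname{Lip}\frac1p}$ and $y\mapsto\|f_y\|_{\operatorname{Lip}\frac1p}$ both belong to $L^{p,q}(\mathbb{R})$, but $f\notin L^\infty(\mathbb{R}^2)$.
   Context: For a function $f$ on $\mathbb{R}^2$, $f_x(y)=f(x,y)$ and $f_y(x)=f(x,y)$ denote the sections. For $\varphi$ on $\mathbb{R}$, $\Delta_h\varphi(t)=\varphi(t+h)-\varphi(t)$; for $\alpha\in(0,1]$, $\operatorname{Lip}\alpha$ is the class of $\varphi\in L^\infty(\mathbb{R})$ with $\|\varphi\|^*_{\operatorname{Lip}\alpha}=\sup_{h>0}h^{-\alpha}\|\Delta_h\varphi\|_\infty<\infty$ ($\|\cdot\|_\infty$ the essential supremum), and $\|\varphi\|_{\operatorname{Lip}\alpha}=\|\varphi\|_\infty+\|\varphi\|^*_{\operatorname{Lip}\alpha}$. For measurable a.e. finite $g$ on $\mathbb{R}$ with $|\{|g|>s\}|<\infty$ for all $s>0$, $g^*$ is its non-increasing rearrangement on $(0,\infty)$, and $L^{p,q}(\mathbb{R})$ consists of such $g$ with $\|g\|_{L^{p,q}}=\left(\int_0^\infty(t^{1/p}g^*(t))^q\frac{dt}{t}\right)^{1/q}<\infty$. *)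

theory Defs
  imports "HOL-Analysis.Analysis" "HOL-Probability.Essential_Supremum"
begin

definition linf_norm :: "('a::euclidean_space \<Rightarrow> real) \<Rightarrow> ereal" where
  "linf_norm g = esssup lebesgue (\<lambda>t. ereal \<bar>g t\<bar>)"

definition in_Linf :: "('a::euclidean_space \<Rightarrow> real) \<Rightarrow> bool" where
  "in_Linf g \<longleftrightarrow> g \<in> borel_measurable lebesgue \<and> linf_norm g < \<infinity>"

definition fdiff :: "real \<Rightarrow> (real \<Rightarrow> real) \<Rightarrow> real \<Rightarrow> real" where
  "fdiff h \<phi> t = \<phi> (t + h) - \<phi> t"

definition lip_seminorm :: "real \<Rightarrow> (real \<Rightarrow> real) \<Rightarrow> ereal" where
  "lip_seminorm \<alpha> \<phi> = (SUP h\<in>{0<..}. ereal (h powr (-\<alpha>)) * linf_norm (fdiff h \<phi>))"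

definition in_Lip :: "real \<Rightarrow> (real \<Rightarrow> real) \<Rightarrow> bool" where
  "in_Lip \<alpha> \<phi> \<longleftrightarrow> in_Linf \<phi> \<and> lip_seminorm \<alpha> \<phi> < \<infinity>"

definition lip_norm :: "real \<Rightarrow> (real \<Rightarrow> real) \<Rightarrow> real" where
  "lip_norm \<alpha> \<phi> = real_of_ereal (linf_norm \<phi> + lip_seminorm \<alpha> \<phi>)"

definition distr_fun :: "(real \<Rightarrow> real) \<Rightarrow> real \<Rightarrow> ennreal" where
  "distr_fun g s = emeasure lebesgue {x. \<bar>g x\<bar> > s}"

definition rearr :: "(real \<Rightarrow> real) \<Rightarrow> real \<Rightarrow> real" where
  "rearr g t = Inf {s. 0 \<le> s \<and> distr_fun g s \<le> ennreal t}"

definition in_Lpq :: "real \<Rightarrow> real \<Rightarrow> (real \<Rightarrow> real) \<Rightarrow> bool" where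
  "in_Lpq p q g \<longleftrightarrow> g \<in> borel_measurable lebesgue \<and>
     (\<forall>s>0. distr_fun g s < \<infinity>) \<and>
     (\<integral>\<^sup>+ t \<in> {0<..}. ennreal ((t powr (1/p) * rearr g t) powr q / t) \<partial>lborel) < \<infinity>"

end

theory Submission
  imports Defs "HOL-Real_Asymp.Real_Asymp"
begin

(*
  Let ell(s) = 1 + ln (1 + 1/s) and let the profile prof(s) = (ln ell(s) - ln ell(1))^+, a
  double-logarithmic function vanishing for s >= 1 and blowing up as s -> 0.  With
  spike(t) = prof |t| put  f(x,y) = min (spike x) (spike y).  Then f is unbounded near the
  origin, while every section is a truncation  min M spike  of the one-variable spike.
*)

section \<open>Elementary logarithm estimates\<close>

lemma ln_le_powr_div:
  fixes y \<beta> :: real assumes "y > 0" "\<beta> > 0" shows "ln y \<le> y powr \<beta> / \<beta>"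
proof -
  have "ln (y powr \<beta>) \<le> y powr \<beta> - 1" using ln_le_minus_one[of "y powr \<beta>"] assms by simp
  then have "\<beta> * ln y \<le> y powr \<beta>" using assms by (simp add: ln_powr)
  then show ?thesis using assms by (simp add: field_simps)
qed

text \<open>The quantity ln(1+t)(1 + ln(1+t)) is O(t^a) on (0,\<infinity>) for every exponent 0 < a \<le> 1:
  it is linear near 0 and logarithmic near \<infinity>.\<close>
lemma ln1p_square_bound:
  fixes a :: real assumes a: "0 < a" "a \<le> 1"
  shows "\<exists>C>0. \<forall>t>0. ln (1+t) * (1 + ln (1+t)) \<le> C * t powr a"
proof -
  define C where "C = (2/a)*(1+2/a)*2 + 2"
  have Cp: "C > 0" unfolding C_def using a by (simp add: add_pos_pos)
  have "ln (1+t) * (1 + ln (1+t)) \<le> C * t powr a" if t: "t > 0" for t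
  proof (cases "t \<le> 1")
    case True
    have l1: "ln (1+t) \<le> t" using t by (intro ln_add_one_self_le_self) simp
    have "ln (1+t) \<le> ln 2" using True t by simp
    also have "ln (2::real) \<le> 1" using ln_le_minus_one[of 2] by simp
    finally have l2: "1 + ln (1+t) \<le> 2" by simp
    have "ln (1+t) * (1 + ln (1+t)) \<le> t * 2" using t l1 l2 by (intro mult_mono) auto
    also have "t \<le> t powr a" using powr_mono'[of a 1 t] a t True by simp
    then have "t * 2 \<le> 2 * t powr a" by simp
    also have "2 * t powr a \<le> C * t powr a" unfolding C_def using a
      by (intro mult_right_mono) (auto simp: add_pos_pos)
    finally show ?thesis .
  next
    case False
    define X where "X = (2*t) powr (a/2)"
    have X1: "X \<ge> 1" unfolding X_def using False a by (intro ge_one_powr_ge_zero) auto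
    have "ln (1+t) \<le> (1+t) powr (a/2) / (a/2)" using t a by (intro ln_le_powr_div) auto
    also have "(1+t) powr (a/2) \<le> X" unfolding X_def using False a by (intro powr_mono2) auto
    then have "(1+t) powr (a/2) / (a/2) \<le> X / (a/2)" using a by (simp add: divide_right_mono)
    finally have l1: "ln (1+t) \<le> (2/a) * X" by (simp add: mult.commute)
    have l2: "1 + ln (1+t) \<le> (1 + 2/a) * X" using l1 X1 by (simp add: algebra_simps)
    have "ln (1+t) * (1 + ln (1+t)) \<le> ((2/a) * X) * ((1 + 2/a) * X)"
      using t l1 l2 X1 a by (intro mult_mono) auto
    also have "\<dots> = (2/a)*(1+2/a) * (X*X)" by simp
    also have "X * X = (2*t) powr a" unfolding X_def using t by (simp add: powr_add[symmetric])
    also have "(2*t) powr a = 2 powr a * t powr a" using t by (simp add: powr_mult)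
    also have "(2::real) powr a \<le> 2" using powr_mono[of a 1 2] a by simp
    then have "(2/a)*(1+2/a) * (2 powr a * t powr a) \<le> (2/a)*(1+2/a) * (2 * t powr a)"
      using a by (intro mult_left_mono mult_right_mono) (auto simp: add_pos_pos)
    also have "\<dots> \<le> C * t powr a" unfolding C_def by (simp add: algebra_simps)
    finally show ?thesis .
  qed
  then show ?thesis using Cp by blast
qed

section \<open>The double-logarithmic profile\<close>

definition ell :: "real \<Rightarrow> real" where "ell s = 1 + ln (1 + 1/s)"
definition loglog :: "real \<Rightarrow> real" where "loglog s = ln (ell s)"

definition prof :: "real \<Rightarrow> real" where "prof s = max 0 (loglog s - loglog 1)"

definition spike :: "real \<Rightarrow> real" where "spike t = prof \<bar>t\<bar>"

lemma ell_gt_1: "s > 0 \<Longrightarrow> ell s > 1"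
  unfolding ell_def by (simp add: ln_gt_zero)

lemma loglog_pos: "s > 0 \<Longrightarrow> loglog s > 0"
  unfolding loglog_def using ell_gt_1 ln_gt_zero by blast

lemma ell_antimono: "0 < a \<Longrightarrow> a \<le> b \<Longrightarrow> ell b \<le> ell a"
  unfolding ell_def by (simp add: frac_le add_pos_pos)

lemma loglog_antimono: "0 < a \<Longrightarrow> a \<le> b \<Longrightarrow> loglog b \<le> loglog a"
  unfolding loglog_def using ell_antimono[of a b] ell_gt_1[of a] ell_gt_1[of b] by simp

lemma ell_diff_le_ln:
  assumes "0 < a" "a \<le> b" shows "ell a - ell b \<le> ln (b / a)"
proof -
  have p: "1 + 1/a > 0" "1 + 1/b > 0" using assms by (simp_all add: add_pos_pos)
  then have e: "ell a - ell b = ln ((1 + 1/a) / (1 + 1/b))" unfolding ell_def by (simp add: ln_div)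
  have "(1 + 1/a) / (1 + 1/b) = (b/a) * ((a+1)/(b+1))" using assms by (simp add: field_simps)
  also have "\<dots> \<le> b / a" using assms by (intro mult_left_le) auto
  finally have "(1 + 1/a) / (1 + 1/b) \<le> b / a" .
  then have "ln ((1 + 1/a) / (1 + 1/b)) \<le> ln (b/a)" using p assms by (subst ln_le_cancel_iff) auto
  then show ?thesis using e by simp
qed

lemma prof_nonneg: "prof s \<ge> 0"
  unfolding prof_def by simp

lemma spike_nonneg: "spike t \<ge> 0"
  unfolding spike_def using prof_nonneg by simp

lemma prof_antimono: "0 < a \<Longrightarrow> a \<le> b \<Longrightarrow> prof b \<le> prof a"
  unfolding prof_def using loglog_antimono[of a b] by simp

lemma prof_le_loglog: "s > 0 \<Longrightarrow> prof s \<le> loglog s"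
  unfolding prof_def using loglog_pos[of s] loglog_pos[of 1] by simp

lemma prof_vanishes: "s = 0 \<or> s \<ge> 1 \<Longrightarrow> prof s = 0"
  unfolding prof_def using loglog_antimono[of 1 s] loglog_pos[of 1] by (auto simp: loglog_def ell_def)

lemma spike_vanishes: "x = 0 \<or> \<bar>x\<bar> \<ge> 1 \<Longrightarrow> spike x = 0"
  unfolding spike_def using prof_vanishes by auto

lemma prof_unbounded: "\<exists>d>0. \<forall>s. 0 < s \<and> s < d \<longrightarrow> prof s > z"
proof -
  define d where "d = exp (- exp (z + loglog 1))"
  have "prof s > z" if s: "0 < s" "s < d" for s
  proof -
    have "ln s < ln d" using s by (subst ln_less_cancel_iff) (auto simp: d_def)
    then have "ln s < - exp (z + loglog 1)" unfolding d_def by simp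
    then have "exp (z + loglog 1) < ln (1/s)" using s by (simp add: ln_div)
    also have "ln (1/s) \<le> ln (1 + 1/s)" using s by (subst ln_le_cancel_iff) (auto simp: add_pos_pos)
    finally have "exp (z + loglog 1) < ell s" unfolding ell_def by simp
    then have "ln (exp (z + loglog 1)) < ln (ell s)" using ell_gt_1[of s] s by (subst ln_less_cancel_iff) auto
    then have "z + loglog 1 < loglog s" unfolding loglog_def by simp
    then show ?thesis unfolding prof_def by simp
  qed
  moreover have "d > 0" unfolding d_def by simp
  ultimately show ?thesis by blast
qed

lemma spike_borel [measurable]: "spike \<in> borel_measurable borel"
  unfolding spike_def prof_def loglog_def ell_def by measurable

section \<open>A modulus of continuity for the double logarithm\<close>

lemma ell_increment:
  assumes r: "0 < r" "r \<le> a" "a \<le> b" "b - a \<le> h"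
  shows "0 \<le> ell a - ell b" and "ell a - ell b \<le> ln (1 + h/r)" and "ell a - ell b \<le> h/a"
proof -
  have ap: "a > 0" "h \<ge> 0" using r by auto
  show "0 \<le> ell a - ell b" using ell_antimono[of a b] r by simp
  have "ell a - ell b \<le> ln (b/a)" using ell_diff_le_ln[of a b] r by simp
  also have "\<dots> \<le> ln (1 + h/a)"
    using ap r by (subst ln_le_cancel_iff) (auto simp: field_simps)
  finally have d1: "ell a - ell b \<le> ln (1 + h/a)" .
  then show "ell a - ell b \<le> h/a" using ln_add_one_self_le_self[of "h/a"] ap by simp
  have "h/a \<le> h/r" using r ap by (intro divide_left_mono) auto
  then have "ln (1 + h/a) \<le> ln (1 + h/r)" using r ap by (subst ln_le_cancel_iff) (auto simp: add_pos_nonneg)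
  with d1 show "ell a - ell b \<le> ln (1 + h/r)" by simp
qed

text \<open>The arithmetic core of the modulus estimate: with t = h/r and \<lambda> = a/r \<ge> 1, an increment
  d of ell satisfying the bounds of the previous lemma obeys d(1 + ln \<lambda> + ln(1+t)) = O(t^\<alpha>).\<close>
lemma weighted_increment_bound:
  fixes C al d t lam :: real
  assumes al: "0 < al" "al \<le> 1" and Cp: "C > 0"
    and C: "\<And>t. t > 0 \<Longrightarrow> ln (1+t) * (1 + ln (1+t)) \<le> C * t powr al"
    and t: "t > 0" and lam: "lam \<ge> 1"
    and d: "0 \<le> d" "d \<le> ln (1+t)" "d \<le> t / lam"
  shows "d * (1 + ln lam + ln (1+t)) \<le> (2*C + 1/al) * t powr al"
proof -
  have lnl0: "ln lam \<ge> 0" using lam by simp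
  have T1: "d * (1 + ln (1+t)) \<le> C * t powr al"
  proof -
    have "d * (1 + ln (1+t)) \<le> ln (1+t) * (1 + ln (1+t))" using d t by (intro mult_right_mono) auto
    also have "\<dots> \<le> C * t powr al" using C t by blast
    finally show ?thesis .
  qed
  have T2: "d * ln lam \<le> (C + 1/al) * t powr al"
  proof (cases "lam \<le> t")
    case True
    have "ln lam \<le> ln (1+t)" using True lam t by (subst ln_le_cancel_iff) auto
    then have "d * ln lam \<le> ln (1+t) * (1 + ln (1+t))" using d lnl0 t
      by (intro mult_mono) auto
    also have "\<dots> \<le> C * t powr al" using C t by blast
    also have "\<dots> \<le> (C + 1/al) * t powr al" using al by (intro mult_right_mono) auto
    finally show ?thesis .
  next
    case False
    have "d * ln lam \<le> (t / lam) * (lam powr al / al)"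
      using d lnl0 ln_le_powr_div[of lam al] lam al by (intro mult_mono) auto
    also have "\<dots> = t * lam powr (al - 1) / al" using lam by (simp add: powr_diff field_simps)
    also have "lam powr (al - 1) \<le> t powr (al - 1)" using False t al by (intro powr_mono2') auto
    then have "t * lam powr (al - 1) / al \<le> t * t powr (al - 1) / al"
      using t al by (intro divide_right_mono mult_left_mono) auto
    also have "t * t powr (al - 1) = t powr al" using t by (simp add: powr_diff)
    also have "t powr al / al \<le> (C + 1/al) * t powr al" using Cp al by (simp add: field_simps)
    finally show ?thesis .
  qed
  show ?thesis using T1 T2 by (simp add: algebra_simps)
qed

lemma loglog_increment:
  fixes al :: real assumes al: "0 < al" "al \<le> 1"
  obtains C0 where "C0 > 0" and "\<And>r a b h. 0 < r \<Longrightarrow> r \<le> a \<Longrightarrow> a \<le> b \<Longrightarrow> b - a \<le> h \<Longrightarrow>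
            loglog a - loglog b \<le> C0 * (h/r) powr al / ell r"
proof -
  obtain C where Cp: "C > 0" and C: "\<And>t. t > 0 \<Longrightarrow> ln (1+t) * (1 + ln (1+t)) \<le> C * t powr al"
    using ln1p_square_bound[OF al] by blast
  define C0 where "C0 = 2*C + 1/al"
  have "loglog a - loglog b \<le> C0 * (h/r) powr al / ell r"
    if r: "0 < r" "r \<le> a" "a \<le> b" "b - a \<le> h" for r a b h
  proof (cases "h = 0")
    case True
    then have "a = b" using r by simp
    then show ?thesis using True al by simp
  next
    case False
    define t where "t = h / r"
    define lam where "lam = a / r"
    define d where "d = ell a - ell b"
    have h: "h > 0" using False r by simp
    have tp: "t > 0" and lam1: "lam \<ge> 1" unfolding t_def lam_def using r h by auto
    have Lgt: "ell b > 1" "ell a > 1" "ell r > 1" using ell_gt_1 r by auto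
    have d: "0 \<le> d" "d \<le> ln (1+t)" "d \<le> t / lam"
      using ell_increment[OF r] r unfolding d_def t_def lam_def by (auto simp: field_simps)
    text \<open>ln is 1-Lipschitz on [1,\<infinity>), so the log-increment is at most d / ell b.\<close>
    have u1: "loglog a - loglog b \<le> d / ell b"
    proof -
      have "loglog a - loglog b = ln (ell a / ell b)" unfolding loglog_def using Lgt by (simp add: ln_div)
      also have "\<dots> \<le> ell a / ell b - 1" using Lgt by (intro ln_le_minus_one) simp
      also have "\<dots> = d / ell b" unfolding d_def using Lgt by (simp add: field_simps)
      finally show ?thesis .
    qed
    text \<open>ell r is comparable to ell b up to the factor 1 + ln(b/r) \<le> 1 + ln \<lambda> + ln(1+t).\<close>
    have Lr: "ell r \<le> ell b * (1 + ln (b/r))"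
    proof -
      have lbr0: "ln (b/r) \<ge> 0" using r by simp
      have "ell r - ell b \<le> ln (b/r)" using ell_diff_le_ln[of r b] r by simp
      moreover have "ln (b/r) \<le> ell b * ln (b/r)" using Lgt lbr0 by (simp add: mult_le_cancel_right1)
      ultimately show ?thesis by (simp add: algebra_simps)
    qed
    have lbr: "ln (b/r) \<le> ln lam + ln (1+t)"
    proof -
      have "b/r \<le> lam + t" unfolding lam_def t_def using r by (simp add: divide_right_mono add_divide_distrib[symmetric])
      also have "\<dots> \<le> lam * (1+t)" using lam1 tp by (simp add: algebra_simps)
      finally have "ln (b/r) \<le> ln (lam * (1+t))" using r tp lam1 by (subst ln_le_cancel_iff) auto
      also have "\<dots> = ln lam + ln (1+t)" using lam1 tp by (simp add: ln_mult)
      finally show ?thesis .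
    qed
    have "(loglog a - loglog b) * ell r \<le> (d / ell b) * (ell b * (1 + ln (b/r)))"
      using u1 Lr Lgt d by (intro mult_mono) auto
    also have "\<dots> = d * (1 + ln (b/r))" using Lgt by simp
    also have "\<dots> \<le> d * (1 + ln lam + ln (1+t))" using mult_left_mono[OF lbr d(1)] by (simp add: algebra_simps)
    also have "\<dots> \<le> C0 * t powr al" unfolding C0_def by (rule weighted_increment_bound[OF al Cp C tp lam1 d])
    finally show ?thesis unfolding t_def using Lgt by (simp add: pos_le_divide_eq)
  qed
  then show ?thesis using that[of C0] Cp al unfolding C0_def by (simp add: add_pos_pos)
qed

lemma min_prof_spike: assumes "r > 0" "t \<noteq> 0" shows "min (prof r) (spike t) = prof (max \<bar>t\<bar> r)"
  using prof_antimono[of r "\<bar>t\<bar>"] prof_antimono[of "\<bar>t\<bar>" r] assms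
  unfolding spike_def by (auto simp: max_def min_def)

lemma truncated_spike_increment:
  assumes al: "0 < al" "al \<le> 1"
  obtains C0 where "C0 > 0" "\<And>r t h. 0 < r \<Longrightarrow> t \<noteq> 0 \<Longrightarrow> t + h \<noteq> 0 \<Longrightarrow> 0 < h \<Longrightarrow>
     \<bar>min (prof r) (spike (t+h)) - min (prof r) (spike t)\<bar> \<le> C0 * (h/r) powr al / ell r"
proof -
  obtain C0 where C0p: "C0 > 0" and C0: "\<And>r a b h. 0 < r \<Longrightarrow> r \<le> a \<Longrightarrow> a \<le> b \<Longrightarrow> b - a \<le> h \<Longrightarrow>
            loglog a - loglog b \<le> C0 * (h/r) powr al / ell r"
    using loglog_increment[OF al] by blast
  have "\<bar>min (prof r) (spike (t+h)) - min (prof r) (spike t)\<bar> \<le> C0 * (h/r) powr al / ell r"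
    if r: "0 < r" "t \<noteq> 0" "t + h \<noteq> 0" "0 < h" for r t h
  proof -
    define s where "s = max \<bar>t+h\<bar> r"
    define s' where "s' = max \<bar>t\<bar> r"
    have ss: "\<bar>s - s'\<bar> \<le> h" "r \<le> s" "r \<le> s'"
      unfolding s_def s'_def using r(4) by (auto simp: max_def abs_if)
    have "\<bar>min (prof r) (spike (t+h)) - min (prof r) (spike t)\<bar> = \<bar>prof s - prof s'\<bar>"
      unfolding s_def s'_def using r min_prof_spike by simp
    also have "\<dots> \<le> \<bar>loglog s - loglog s'\<bar>" unfolding prof_def by simp
    also have "\<dots> \<le> C0 * (h/r) powr al / ell r"
      using C0[of r s s' h] C0[of r s' s h] loglog_antimono[of s s'] loglog_antimono[of s' s] ss r
      by (cases "s \<le> s'") auto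
    finally show ?thesis .
  qed
  then show ?thesis using that C0p by blast
qed

section \<open>Essential supremum and Lipschitz norms\<close>

lemma borel_to_lebesgue: "f \<in> borel_measurable borel \<Longrightarrow> f \<in> borel_measurable lebesgue"
  by (rule measurable_completion) simp

lemma lebesgue_real_nontrivial: "emeasure (lebesgue :: real measure) (space lebesgue) \<noteq> 0"
  by (simp add: emeasure_completion)

lemma linf_norm_nonneg:
  fixes g :: "real \<Rightarrow> real"
  assumes [measurable]: "g \<in> borel_measurable lebesgue" shows "0 \<le> linf_norm g"
proof -
  have "esssup lebesgue (\<lambda>t::real. (0::ereal)) \<le> esssup lebesgue (\<lambda>t. ereal \<bar>g t\<bar>)"
    by (rule esssup_mono) auto
  then show ?thesis
    unfolding linf_norm_def using esssup_const[OF lebesgue_real_nontrivial, of "0::ereal"] by simp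
qed

lemma linf_norm_zero: "linf_norm (\<lambda>y::real. 0::real) = 0"
  unfolding linf_norm_def using esssup_const[OF lebesgue_real_nontrivial, of "0::ereal"]
  by (simp add: zero_ereal_def)

lemma linf_norm_le:
  fixes g :: "real \<Rightarrow> real"
  assumes [measurable]: "g \<in> borel_measurable lebesgue" and "AE t in lebesgue. \<bar>g t\<bar> \<le> c"
  shows "linf_norm g \<le> ereal c"
  unfolding linf_norm_def using assms(2) by (intro esssup_I) (auto elim: eventually_mono)

lemma linf_norm_mono:
  fixes g g' :: "real \<Rightarrow> real"
  assumes [measurable]: "g \<in> borel_measurable lebesgue" and "\<And>t. \<bar>g t\<bar> \<le> \<bar>g' t\<bar>"
  shows "linf_norm g \<le> linf_norm g'"
  unfolding linf_norm_def using assms(2) by (intro esssup_mono) auto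

lemma fdiff_borel:
  assumes [measurable]: "\<phi> \<in> borel_measurable borel" shows "fdiff h \<phi> \<in> borel_measurable borel"
proof -
  have "(\<lambda>x. \<phi> (x + h)) \<in> borel_measurable borel"
    by (rule measurable_compose[OF _ assms]) simp
  then show ?thesis unfolding fdiff_def by measurable
qed

lemma lip_seminorm_nonneg:
  assumes "\<phi> \<in> borel_measurable borel" shows "0 \<le> lip_seminorm al \<phi>"
proof -
  have "0 \<le> ereal (1 powr (-al)) * linf_norm (fdiff 1 \<phi>)"
    using linf_norm_nonneg[OF borel_to_lebesgue[OF fdiff_borel[OF assms]]] by simp
  also have "\<dots> \<le> lip_seminorm al \<phi>" unfolding lip_seminorm_def by (rule SUP_upper) auto
  finally show ?thesis .
qed

lemma norms_mono:
  assumes [measurable]: "\<phi> \<in> borel_measurable borel"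
    and "\<And>t. \<bar>\<phi> t\<bar> \<le> \<bar>\<psi> t\<bar>" and "\<And>h t. \<bar>fdiff h \<phi> t\<bar> \<le> \<bar>fdiff h \<psi> t\<bar>"
  shows "linf_norm \<phi> + lip_seminorm al \<phi> \<le> linf_norm \<psi> + lip_seminorm al \<psi>"
proof (rule add_mono)
  show "linf_norm \<phi> \<le> linf_norm \<psi>" using assms(2) by (intro linf_norm_mono borel_to_lebesgue) auto
  show "lip_seminorm al \<phi> \<le> lip_seminorm al \<psi>"
    unfolding lip_seminorm_def
  proof (intro SUP_mono bexI)
    fix h :: real assume "h \<in> {0<..}"
    show "ereal (h powr - al) * linf_norm (fdiff h \<phi>) \<le> ereal (h powr - al) * linf_norm (fdiff h \<psi>)"
      using assms(3) by (intro ereal_mult_left_mono linf_norm_mono borel_to_lebesgue fdiff_borel) auto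
  qed
qed

lemma AE_avoid_two_points: "AE t in lebesgue. t \<noteq> (0::real) \<and> t + h \<noteq> 0"
proof -
  have "AE t in lborel. t \<noteq> (0::real)" "AE t in lborel. t \<noteq> (-h::real)"
    by (rule AE_lborel_singleton)+
  then have "AE t in lborel. t \<noteq> (0::real) \<and> t + h \<noteq> 0" by eventually_elim auto
  then show ?thesis by (simp add: AE_completion_iff)
qed

section \<open>Truncations of the spike\<close>

text \<open>Every section of the counterexample is one of these truncations.\<close>
definition trunc :: "real \<Rightarrow> real \<Rightarrow> real" where "trunc M = (\<lambda>y. min M (spike y))"

definition trunc_norm :: "real \<Rightarrow> real \<Rightarrow> ereal" where
  "trunc_norm al M = linf_norm (trunc M) + lip_seminorm al (trunc M)"

lemma trunc_borel [measurable]: "trunc M \<in> borel_measurable borel"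
  unfolding trunc_def by measurable

lemma trunc_norm_nonneg: "0 \<le> trunc_norm al M"
  unfolding trunc_norm_def
  using linf_norm_nonneg[OF borel_to_lebesgue] lip_seminorm_nonneg by simp

lemma trunc_norm_mono: assumes "0 \<le> M" "M \<le> M'" shows "trunc_norm al M \<le> trunc_norm al M'"
  unfolding trunc_norm_def using assms spike_nonneg
  by (intro norms_mono) (auto simp: trunc_def fdiff_def min_def)

lemma trunc_norm_zero: "trunc_norm al 0 = 0"
proof -
  have z: "trunc 0 = (\<lambda>y. 0)" unfolding trunc_def using spike_nonneg by (auto simp: min_def)
  have "fdiff h (\<lambda>y. 0) = (\<lambda>y. 0)" for h unfolding fdiff_def by simp
  then show ?thesis unfolding trunc_norm_def lip_seminorm_def z by (simp add: linf_norm_zero)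
qed

lemma trunc_norm_bound:
  assumes al: "0 < al" "al \<le> 1"
  obtains C0 where "C0 > 0"
    "\<And>r. 0 < r \<Longrightarrow> trunc_norm al (prof r) \<le> ereal (prof r + C0 * r powr (-al) / ell r)"
proof -
  obtain C0 where C0p: "C0 > 0" and C0: "\<And>r t h. 0 < r \<Longrightarrow> t \<noteq> 0 \<Longrightarrow> t + h \<noteq> 0 \<Longrightarrow> 0 < h \<Longrightarrow>
     \<bar>min (prof r) (spike (t+h)) - min (prof r) (spike t)\<bar> \<le> C0 * (h/r) powr al / ell r"
    using truncated_spike_increment[OF al] by blast
  have "trunc_norm al (prof r) \<le> ereal (prof r + C0 * r powr (-al) / ell r)" if r: "0 < r" for r
  proof -
    have sup: "linf_norm (trunc (prof r)) \<le> ereal (prof r)"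
      by (rule linf_norm_le[OF borel_to_lebesgue[OF trunc_borel]]) (use spike_nonneg prof_nonneg[of r] in \<open>auto simp: trunc_def\<close>)
    have "ereal (h powr - al) * linf_norm (fdiff h (trunc (prof r))) \<le> ereal (C0 * r powr (-al) / ell r)"
      if h: "h > 0" for h
    proof -
      have "linf_norm (fdiff h (trunc (prof r))) \<le> ereal (C0 * (h/r) powr al / ell r)"
      proof (rule linf_norm_le)
        show "AE t in lebesgue. \<bar>fdiff h (trunc (prof r)) t\<bar> \<le> C0 * (h/r) powr al / ell r"
          using AE_avoid_two_points[of h] by eventually_elim
            (use C0 r h in \<open>auto simp: fdiff_def trunc_def add.commute\<close>)
      qed (simp add: borel_to_lebesgue fdiff_borel)
      then have "ereal (h powr - al) * linf_norm (fdiff h (trunc (prof r)))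
          \<le> ereal (h powr - al) * ereal (C0 * (h/r) powr al / ell r)"
        by (intro ereal_mult_left_mono) auto
      also have "h powr - al * (C0 * (h/r) powr al / ell r) = C0 * r powr (-al) / ell r"
        using h r by (simp add: powr_divide powr_minus field_simps)
      then have "ereal (h powr - al) * ereal (C0 * (h/r) powr al / ell r) = ereal (C0 * r powr (-al) / ell r)"
        by simp
      finally show ?thesis .
    qed
    then have "lip_seminorm al (trunc (prof r)) \<le> ereal (C0 * r powr (-al) / ell r)"
      unfolding lip_seminorm_def by (intro SUP_least) auto
    with sup have "trunc_norm al (prof r) \<le> ereal (prof r) + ereal (C0 * r powr (-al) / ell r)"
      unfolding trunc_norm_def by (rule add_mono)
    then show ?thesis by simp
  qed
  then show ?thesis using that C0p by blast
qed

text \<open>Every truncation at a nonnegative level is in Lip \<alpha>, by monotonicity in the level.\<close>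
lemma trunc_norm_finite:
  assumes al: "0 < al" "al \<le> 1" and M: "0 \<le> M"
  shows "trunc_norm al M < \<infinity>"
proof -
  obtain C0 where C0: "\<And>r. 0 < r \<Longrightarrow> trunc_norm al (prof r) \<le> ereal (prof r + C0 * r powr (-al) / ell r)"
    using trunc_norm_bound[OF al] by blast
  obtain d where d: "d > 0" "\<And>s. 0 < s \<and> s < d \<longrightarrow> prof s > M" using prof_unbounded by blast
  have "trunc_norm al M \<le> trunc_norm al (prof (d/2))"
    using M d(1) d(2)[of "d/2"] by (intro trunc_norm_mono) auto
  also have "\<dots> \<le> ereal (prof (d/2) + C0 * (d/2) powr (-al) / ell (d/2))" using C0 d by simp
  also have "\<dots> < \<infinity>" by simp
  finally show ?thesis .
qed

lemma trunc_in_Lip: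
  assumes al: "0 < al" "al \<le> 1" and M: "0 \<le> M"
  shows "in_Lip al (trunc M)"
proof -
  have "0 \<le> linf_norm (trunc M)" "0 \<le> lip_seminorm al (trunc M)"
    using linf_norm_nonneg[OF borel_to_lebesgue] lip_seminorm_nonneg by auto
  then have "linf_norm (trunc M) < \<infinity>" "lip_seminorm al (trunc M) < \<infinity>"
    using trunc_norm_finite[OF al M] unfolding trunc_norm_def
    by (auto simp: ereal_add_le_add_iff2 less_top[symmetric])
  then show ?thesis unfolding in_Lip_def in_Linf_def by (simp add: borel_to_lebesgue)
qed

section \<open>A sufficient condition for membership in L^{p,q}\<close>

text \<open>The majorant of the section norms near the origin.\<close>
definition lorentz_majorant :: "real \<Rightarrow> real \<Rightarrow> real" where
  "lorentz_majorant p r = r powr (-(1/p)) / (p - ln r)"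

lemma lorentz_majorant_antimono:
  fixes p r r' :: real assumes p: "p \<ge> 1" and r: "0 < r" "r \<le> r'" "r' < 1"
  shows "lorentz_majorant p r' \<le> lorentz_majorant p r"
proof -
  define d where "d = ln r' - ln r"
  define P' where "P' = p - ln r'"
  have d0: "d \<ge> 0" unfolding d_def using r by simp
  have P'p: "P' \<ge> p" unfolding P'_def using r by simp
  have e: "r powr (-(1/p)) = r' powr (-(1/p)) * exp ((1/p) * d)"
    using r unfolding d_def by (simp add: powr_def exp_add[symmetric] algebra_simps)
  have "(1 + (1/p) * d) * P' \<le> exp ((1/p) * d) * P'"
    using exp_ge_add_one_self[of "(1/p) * d"] P'p p by (intro mult_right_mono) auto
  moreover have "(1/p) * d * p \<le> (1/p) * d * P'" using P'p p d0 by (intro mult_left_mono) auto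
  ultimately have key: "P' + d \<le> exp ((1/p) * d) * P'" using p by (simp add: algebra_simps)
  have "p - ln r = P' + d" unfolding P'_def d_def by simp
  have "r' powr (-(1/p)) * (P' + d) \<le> r' powr (-(1/p)) * (exp ((1/p) * d) * P')"
    using key by (intro mult_left_mono) auto
  then have "r' powr (-(1/p)) / P' \<le> r' powr (-(1/p)) * exp ((1/p) * d) / (P' + d)"
    using P'p p d0 by (simp add: divide_simps algebra_simps)
  then show ?thesis unfolding lorentz_majorant_def e \<open>p - ln r = P' + d\<close> P'_def[symmetric] .
qed

lemma rearr_le:
  assumes "0 \<le> s" "distr_fun g s \<le> ennreal t"
  shows "0 \<le> rearr g t" and "rearr g t \<le> s"
proof -
  let ?A = "{s. 0 \<le> s \<and> distr_fun g s \<le> ennreal t}"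
  have inA: "s \<in> ?A" using assms by simp
  show "rearr g t \<le> s" unfolding rearr_def by (rule cInf_lower[OF inA]) (rule bdd_belowI[of _ 0], auto)
  show "0 \<le> rearr g t" unfolding rearr_def using inA by (intro cInf_greatest) auto
qed

text \<open>The logarithmic weight (p - ln(t/2))^(-q)/t is integrable on (0,2) for q > 1:
  it has the primitive (p - ln(t/2))^(1-q)/(q-1), which tends to 0 at 0.\<close>
lemma log_weight_integrable:
  fixes p q :: real assumes p: "p \<ge> 1" and q: "q > 1"
  shows "set_integrable lborel {0<..<2} (\<lambda>t. (p - ln (t/2)) powr (-q) / t)"
proof -
  define F where "F t = (p - ln (t/2)) powr (1-q) / (q-1)" for t
  have P: "p - ln (t/2) > 0" if "0 < t" "t < 2" for t
  proof -
    have "ln (t/2) < 0" using that by simp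
    then show ?thesis using p by simp
  qed
  have D: "(F has_real_derivative (p - ln (t/2)) powr (-q) / t) (at t)" if t: "0 < t" "t < 2" for t
  proof -
    have "(F has_real_derivative ((1-q) * (p - ln (t/2)) powr (1-q-1) * (- (1/2) / (t/2))) / (q-1)) (at t)"
      unfolding F_def using P[OF t] t q by (auto intro!: derivative_eq_intros)
    moreover have "((1-q) * (p - ln (t/2)) powr (1-q-1) * (- (1/2) / (t/2))) / (q-1) = (p - ln (t/2)) powr (-q) / t"
      using q t by (simp add: field_simps)
    ultimately show ?thesis by simp
  qed
  have A: "(F \<longlongrightarrow> 0) (at_right 0)"
  proof -
    have "filterlim (\<lambda>t. p - ln (t/2)) at_top (at_right (0::real))" by real_asymp
    then have "((\<lambda>t. (p - ln (t/2)) powr (1-q)) \<longlongrightarrow> 0) (at_right 0)"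
      using q by (intro tendsto_neg_powr) auto
    from tendsto_divide_zero[OF this, of "q-1"] show ?thesis unfolding F_def by simp
  qed
  have B: "(F \<longlongrightarrow> F 2) (at_left 2)"
  proof -
    have "isCont F 2" unfolding F_def using p q by (intro continuous_intros) auto
    then show ?thesis by (simp add: isCont_def filterlim_at_split)
  qed
  have "set_integrable lborel (einterval (ereal 0) (ereal 2)) (\<lambda>t. (p - ln (t/2)) powr (-q) / t)"
  proof (rule interval_integral_FTC_nonneg[where F=F and A=0 and B="F 2"])
    show "DERIV F x :> (p - ln (x/2)) powr (-q) / x" if "ereal 0 < ereal x" "ereal x < ereal 2" for x
      using D that by simp
    show "isCont (\<lambda>t. (p - ln (t/2)) powr (-q) / t) x" if "ereal 0 < ereal x" "ereal x < ereal 2" for x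
      using that P[of x] by (intro continuous_intros) auto
    show "((F \<circ> real_of_ereal) \<longlongrightarrow> 0) (at_right (ereal 0))" using A by (simp add: ereal_tendsto_simps1)
    show "((F \<circ> real_of_ereal) \<longlongrightarrow> F 2) (at_left (ereal 2))" using B by (simp add: ereal_tendsto_simps1)
  qed auto
  then show ?thesis by simp
qed

lemma lebesgue_interval: "l \<le> u \<Longrightarrow> emeasure lebesgue {l<..<u::real} = ennreal (u - l)"
  by (simp add: emeasure_completion)

lemma rearr_majorant_bound:
  fixes g :: "real \<Rightarrow> real" and p Cb :: real
  assumes p: "p > 1" and Cb: "Cb \<ge> 0"
    and zero: "\<And>x. x = 0 \<or> \<bar>x\<bar> \<ge> 1 \<Longrightarrow> g x = 0"
    and bd: "\<And>x. 0 < \<bar>x\<bar> \<Longrightarrow> \<bar>x\<bar> < 1 \<Longrightarrow> \<bar>g x\<bar> \<le> Cb * lorentz_majorant p \<bar>x\<bar>"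
    and t: "t > 0"
  defines "S \<equiv> (if t < 2 then Cb * lorentz_majorant p (t/2) else 0)"
  shows "0 \<le> rearr g t" and "rearr g t \<le> S"
proof -
  have S0: "S \<ge> 0"
  proof (cases "t < 2")
    case True
    then have "ln (t/2) < 0" using t by simp
    then show ?thesis unfolding S_def lorentz_majorant_def using True Cb p by simp
  qed (simp add: S_def)
  have sub: "{x. S < \<bar>g x\<bar>} \<subseteq> {- min 1 (t/2) <..< min 1 (t/2)}"
  proof (rule subsetI, rule ccontr)
    fix x assume x: "x \<in> {x. S < \<bar>g x\<bar>}" and "x \<notin> {- min 1 (t/2) <..< min 1 (t/2)}"
    then have ax: "\<bar>x\<bar> \<ge> min 1 (t/2)" by auto
    have "\<not> (x = 0 \<or> \<bar>x\<bar> \<ge> 1)" using x zero[of x] S0 by auto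
    then have x1: "0 < \<bar>x\<bar>" "\<bar>x\<bar> < 1" by auto
    then have t2: "t < 2" "t/2 \<le> \<bar>x\<bar>" using ax by (auto simp: min_def split: if_splits)
    have "\<bar>g x\<bar> \<le> Cb * lorentz_majorant p \<bar>x\<bar>" using bd x1 by simp
    also have "\<dots> \<le> Cb * lorentz_majorant p (t/2)"
      using lorentz_majorant_antimono[of p "t/2" "\<bar>x\<bar>"] p t t2 x1 Cb by (intro mult_left_mono) auto
    finally show False using x t2 by (simp add: S_def)
  qed
  have "distr_fun g S \<le> emeasure lebesgue {- min 1 (t/2) <..< min 1 (t/2)}"
    unfolding distr_fun_def using sub by (intro emeasure_mono) auto
  also have "\<dots> = ennreal (2 * min 1 (t/2))" using t by (subst lebesgue_interval) auto
  also have "\<dots> \<le> ennreal t" by (intro ennreal_leI) auto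
  finally have "distr_fun g S \<le> ennreal t" .
  then show "0 \<le> rearr g t" "rearr g t \<le> S" by (rule rearr_le[OF S0])+
qed

lemma Lpq_criterion:
  fixes g :: "real \<Rightarrow> real" and p q Cb :: real
  assumes p: "p > 1" and q: "q > 1" and Cb: "Cb \<ge> 0"
    and gm: "g \<in> borel_measurable lebesgue"
    and zero: "\<And>x. x = 0 \<or> \<bar>x\<bar> \<ge> 1 \<Longrightarrow> g x = 0"
    and bd: "\<And>x. 0 < \<bar>x\<bar> \<Longrightarrow> \<bar>x\<bar> < 1 \<Longrightarrow> \<bar>g x\<bar> \<le> Cb * lorentz_majorant p \<bar>x\<bar>"
  shows "in_Lpq p q g"
proof -
  have rearr: "0 \<le> rearr g t" "rearr g t \<le> (if t < 2 then Cb * lorentz_majorant p (t/2) else 0)"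
    if "t > 0" for t
    using rearr_majorant_bound[of p Cb g t] p Cb zero bd that by blast+
  have distr_finite: "distr_fun g s < \<infinity>" if s: "s > 0" for s
  proof -
    have "{x. s < \<bar>g x\<bar>} \<subseteq> {-1<..<1}"
    proof
      fix x assume "x \<in> {x. s < \<bar>g x\<bar>}"
      then have "\<not> (x = 0 \<or> \<bar>x\<bar> \<ge> 1)" using zero[of x] s by auto
      then show "x \<in> {-1<..<1}" by auto
    qed
    then have "distr_fun g s \<le> emeasure lebesgue {-1<..<1::real}"
      unfolding distr_fun_def by (rule emeasure_mono) simp
    also have "\<dots> < \<infinity>" by (simp add: lebesgue_interval)
    finally show ?thesis .
  qed
  define H where "H t = (p - ln (t/2)) powr (-q) / t" for t
  define K where "K = (Cb * 2 powr (1/p)) powr q"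
  have ptw: "ennreal ((t powr (1/p) * rearr g t) powr q / t) * indicator {0<..} t
      \<le> ennreal K * ennreal (indicator {0<..<2} t *\<^sub>R H t)" for t
  proof (cases "0 < t \<and> t < 2")
    case False
    show ?thesis
    proof (cases "t > 0")
      case True
      then have "rearr g t = 0" using False rearr[OF True] by simp
      then show ?thesis by simp
    qed simp
  next
    case True
    then have t: "t > 0" "t < 2" by auto
    have "ln (t/2) < 0" using t by simp
    then have P: "p - ln (t/2) > 0" using p by simp
    have "t powr (1/p) * rearr g t \<le> t powr (1/p) * (Cb * lorentz_majorant p (t/2))"
      using rearr[OF t(1)] t by (intro mult_left_mono) auto
    also have "\<dots> = Cb * (t powr (1/p) * (t/2) powr (-(1/p))) / (p - ln (t/2))"
      unfolding lorentz_majorant_def by simp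
    also have "t powr (1/p) * (t/2) powr (-(1/p)) = 2 powr (1/p)"
      using t by (simp add: powr_divide powr_minus field_simps)
    finally have "(t powr (1/p) * rearr g t) powr q / t \<le> (Cb * 2 powr (1/p) / (p - ln (t/2))) powr q / t"
      using rearr[OF t(1)] t q by (intro divide_right_mono powr_mono2) auto
    also have "\<dots> = K * H t"
      unfolding K_def H_def using P Cb t by (simp add: powr_divide powr_minus_divide field_simps)
    moreover have "0 \<le> K" "0 \<le> H t" unfolding K_def H_def using t by auto
    ultimately show ?thesis using t by (simp add: ennreal_mult[symmetric] ennreal_leI)
  qed
  have int: "set_integrable lborel {0<..<2} H" unfolding H_def using log_weight_integrable p q by simp
  then have mE: "(\<lambda>t. ennreal (indicator {0<..<2} t *\<^sub>R H t)) \<in> borel_measurable lborel"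
    by (simp add: set_integrable_def)
  have "(\<integral>\<^sup>+ t \<in> {0<..}. ennreal ((t powr (1/p) * rearr g t) powr q / t) \<partial>lborel)
      \<le> (\<integral>\<^sup>+ t. ennreal K * ennreal (indicator {0<..<2} t *\<^sub>R H t) \<partial>lborel)"
    by (intro nn_integral_mono ptw)
  also have "\<dots> = ennreal K * (\<integral>\<^sup>+ t. ennreal (indicator {0<..<2} t *\<^sub>R H t) \<partial>lborel)"
    by (rule nn_integral_cmult[OF mE])
  also have "\<dots> < \<infinity>"
    using integrableD(2)[OF int[unfolded set_integrable_def]] by (simp add: ennreal_mult_less_top less_top)
  finally show ?thesis unfolding in_Lpq_def using gm distr_finite by blast
qed

section \<open>Size of the section norms\<close>

lemma loglog_bound:
  fixes al :: real assumes al: "0 < al" "al \<le> 1"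
  obtains C2 where "C2 > 0" "\<And>r. 0 < r \<Longrightarrow> r < 1 \<Longrightarrow> loglog r \<le> C2 * r powr (-al) / ell r"
proof -
  define C2 where "C2 = 2 * (1 + 2/al)^2"
  have "loglog r \<le> C2 * r powr (-al) / ell r" if r: "0 < r" "r < 1" for r
  proof -
    define X where "X = (2/r) powr (al/2)"
    have X1: "X \<ge> 1" unfolding X_def using r al by (intro ge_one_powr_ge_zero) auto
    have L1: "ell r > 1" using ell_gt_1 r by simp
    have "ln (1 + 1/r) \<le> ln (2/r)" using r by (subst ln_le_cancel_iff) (auto simp: field_simps add_pos_pos)
    also have "ln (2/r) \<le> (2/r) powr (al/2) / (al/2)" using r al by (intro ln_le_powr_div) auto
    finally have "ell r \<le> 1 + (2/al) * X" unfolding ell_def X_def by (simp add: mult.commute)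
    also have "\<dots> \<le> (1 + 2/al) * X" using X1 by (simp add: algebra_simps)
    finally have LX: "ell r \<le> (1 + 2/al) * X" .
    have "loglog r \<le> ell r - 1" unfolding loglog_def using L1 by (intro ln_le_minus_one) simp
    then have "loglog r * ell r \<le> ell r * ell r" using L1 by (intro mult_right_mono) auto
    also have "\<dots> \<le> ((1 + 2/al) * X) * ((1 + 2/al) * X)" using LX L1 by (intro mult_mono) auto
    also have "\<dots> = (1 + 2/al)^2 * (2 powr al * r powr (-al))"
      unfolding X_def using r by (simp add: power2_eq_square powr_add[symmetric] powr_divide powr_minus_divide)
    also have "\<dots> \<le> (1 + 2/al)^2 * (2 * r powr (-al))"
      using powr_mono[of al 1 2] al by (intro mult_left_mono mult_right_mono) auto
    also have "\<dots> = C2 * r powr (-al)" unfolding C2_def by simp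
    finally show ?thesis using L1 by (simp add: pos_le_divide_eq)
  qed
  moreover have "C2 > 0"
  proof -
    have "1 + 2/al > 0" using al by (simp add: add_pos_pos)
    then show ?thesis unfolding C2_def by simp
  qed
  ultimately show ?thesis using that by blast
qed

text \<open>Combining the two bounds: the truncation at level prof r has norm O(lorentz_majorant p r)
  on (0,1), where \<alpha> = 1/p; the factor 1/ell r is what produces the logarithmic gain.\<close>
lemma trunc_norm_majorant:
  fixes p :: real assumes p: "p > 1"
  obtains Cb where "Cb \<ge> 0"
    "\<And>r. 0 < r \<Longrightarrow> r < 1 \<Longrightarrow> real_of_ereal (trunc_norm (1/p) (prof r)) \<le> Cb * lorentz_majorant p r"
proof -
  have al: "0 < 1/p" "1/p \<le> 1" using p by auto
  obtain C0 where C0p: "C0 > 0"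
    and C0: "\<And>r. 0 < r \<Longrightarrow> trunc_norm (1/p) (prof r) \<le> ereal (prof r + C0 * r powr (-(1/p)) / ell r)"
    using trunc_norm_bound[OF al] by blast
  obtain C2 where C2p: "C2 > 0" and C2: "\<And>r. 0 < r \<Longrightarrow> r < 1 \<Longrightarrow> loglog r \<le> C2 * r powr (-(1/p)) / ell r"
    using loglog_bound[OF al] by blast
  define Cb where "Cb = (C2 + C0) * p"
  have "real_of_ereal (trunc_norm (1/p) (prof r)) \<le> Cb * lorentz_majorant p r" if r: "0 < r" "r < 1" for r
  proof -
    have L1: "ell r > 1" using ell_gt_1 r by simp
    have "- ln r = ln (1/r)" using r by (simp add: ln_div)
    also have "\<dots> \<le> ln (1 + 1/r)" using r by (subst ln_le_cancel_iff) (auto simp: add_pos_pos)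
    also have "\<dots> \<le> p * ln (1 + 1/r)"
    proof -
      have "0 \<le> ln (1 + 1/r)" using r by simp
      then show ?thesis using p by (simp add: mult_le_cancel_right1)
    qed
    finally have "p - ln r \<le> p * ell r" unfolding ell_def by (simp add: algebra_simps)
    moreover have "ln r < 0" using r by simp
    ultimately have inv_ell: "1 / ell r \<le> p / (p - ln r)" using L1 p by (simp add: divide_simps)
    have "real_of_ereal (trunc_norm (1/p) (prof r)) \<le> prof r + C0 * r powr (-(1/p)) / ell r"
      using C0[OF r(1)] trunc_norm_nonneg[of "1/p" "prof r"] by (cases "trunc_norm (1/p) (prof r)") auto
    also have "\<dots> \<le> (C2 + C0) * r powr (-(1/p)) * (1 / ell r)"
      using prof_le_loglog[of r] C2[OF r] r by (simp add: add_divide_distrib distrib_right)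
    also have "\<dots> \<le> (C2 + C0) * r powr (-(1/p)) * (p / (p - ln r))"
      using C0p C2p inv_ell by (intro mult_left_mono) auto
    also have "\<dots> = Cb * lorentz_majorant p r" unfolding Cb_def lorentz_majorant_def by simp
    finally show ?thesis .
  qed
  moreover have "Cb \<ge> 0" unfolding Cb_def using C0p C2p p by simp
  ultimately show ?thesis using that by blast
qed

lemma section_norms_Lpq:
  fixes p q :: real assumes p: "1 < p" and q: "1 < q"
  shows "in_Lpq p q (\<lambda>x. real_of_ereal (trunc_norm (1/p) (spike x)))"
proof -
  have al: "0 < 1/p" "1/p \<le> 1" using p by auto
  obtain Cb where Cb: "Cb \<ge> 0"
    and B: "\<And>r. 0 < r \<Longrightarrow> r < 1 \<Longrightarrow> real_of_ereal (trunc_norm (1/p) (prof r)) \<le> Cb * lorentz_majorant p r"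
    using trunc_norm_majorant[OF p] by blast
  text \<open>Measurability: the norm is a monotone function of the level spike x.\<close>
  define N where "N M = real_of_ereal (trunc_norm (1/p) (max 0 M))" for M
  have "mono N"
  proof
    fix M M' :: real assume "M \<le> M'"
    then show "N M \<le> N M'" unfolding N_def
      using trunc_norm_mono[of "max 0 M" "max 0 M'"] trunc_norm_finite[OF al, of "max 0 M'"] trunc_norm_nonneg
      by (intro real_of_ereal_positive_mono) auto
  qed
  then have [measurable]: "N \<in> borel_measurable borel" by (rule borel_measurable_mono)
  have eq: "(\<lambda>x. real_of_ereal (trunc_norm (1/p) (spike x))) = (\<lambda>x. N (spike x))"
    unfolding N_def using spike_nonneg by (simp add: max_def)
  show ?thesis
  proof (rule Lpq_criterion[OF p q Cb])
    show "(\<lambda>x. real_of_ereal (trunc_norm (1/p) (spike x))) \<in> borel_measurable lebesgue"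
      unfolding eq by (intro borel_to_lebesgue) measurable
    show "real_of_ereal (trunc_norm (1/p) (spike x)) = 0" if "x = 0 \<or> \<bar>x\<bar> \<ge> 1" for x
      using spike_vanishes[OF that] trunc_norm_zero by simp
    show "\<bar>real_of_ereal (trunc_norm (1/p) (spike x))\<bar> \<le> Cb * lorentz_majorant p \<bar>x\<bar>"
      if "0 < \<bar>x\<bar>" "\<bar>x\<bar> < 1" for x
      using B[OF that] trunc_norm_nonneg[of "1/p" "spike x"] unfolding spike_def
      by (simp add: real_of_ereal_pos)
  qed
qed

section \<open>The counterexample\<close>

definition cross_spike :: "real \<times> real \<Rightarrow> real" where
  "cross_spike z = min (spike (fst z)) (spike (snd z))"

lemma cross_spike_borel: "cross_spike \<in> borel_measurable borel"
proof -
  have [measurable]: "fst \<in> borel_measurable (borel :: (real \<times> real) measure)"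
    "snd \<in> borel_measurable (borel :: (real \<times> real) measure)"
    by (intro borel_measurable_continuous_onI continuous_intros)+
  show ?thesis unfolding cross_spike_def by measurable
qed

lemma cross_spike_sections:
  "(\<lambda>y. cross_spike (x, y)) = trunc (spike x)" "(\<lambda>x. cross_spike (x, y)) = trunc (spike y)"
  unfolding cross_spike_def trunc_def by (simp_all add: min.commute)

lemma lip_norm_trunc: "lip_norm al (trunc M) = real_of_ereal (trunc_norm al M)"
  unfolding lip_norm_def trunc_norm_def by simp

text \<open>The counterexample exceeds every level c on a square (0,d)^2 of positive measure.\<close>
lemma cross_spike_not_Linf: "\<not> in_Linf cross_spike"
proof
  assume "in_Linf cross_spike"
  then obtain c where c: "linf_norm cross_spike \<le> ereal c"
    unfolding in_Linf_def by (cases "linf_norm cross_spike") auto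
  have "AE z in lebesgue. ereal \<bar>cross_spike z\<bar> \<le> linf_norm cross_spike"
    unfolding linf_norm_def by (rule esssup_AE)
  then have "AE z in lebesgue. \<bar>cross_spike z\<bar> \<le> c"
  proof (rule eventually_mono)
    fix z assume "ereal \<bar>cross_spike z\<bar> \<le> linf_norm cross_spike"
    then have "ereal \<bar>cross_spike z\<bar> \<le> ereal c" using c by (rule order_trans)
    then show "\<bar>cross_spike z\<bar> \<le> c" by simp
  qed
  then have "AE z in lborel. \<bar>cross_spike z\<bar> \<le> c" by (simp add: AE_completion_iff)
  then obtain N where "{z \<in> space lborel. \<not> \<bar>cross_spike z\<bar> \<le> c} \<subseteq> N"
    "emeasure lborel N = 0" "N \<in> sets lborel"
    by (rule AE_E)
  then have N: "N \<in> null_sets lborel" "{z. \<not> \<bar>cross_spike z\<bar> \<le> c} \<subseteq> N"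
    by (simp_all add: null_setsI)
  obtain d where d: "d > 0" "\<And>s. 0 < s \<and> s < d \<longrightarrow> prof s > c" using prof_unbounded by blast
  have "box (0,0) (d,d) \<subseteq> N"
  proof
    fix z :: "real \<times> real" assume z: "z \<in> box (0,0) (d,d)"
    then have "prof \<bar>fst z\<bar> > c" "prof \<bar>snd z\<bar> > c"
      using d by (cases z; auto simp: box_def Basis_prod_def)+
    then show "z \<in> N" using N(2) unfolding cross_spike_def spike_def by auto
  qed
  then have "emeasure lborel (box (0,0) (d,d::real)) = 0"
    using N(1) by (metis emeasure_mono null_setsD1 null_setsD2 le_zero_eq)
  moreover have "emeasure lborel (box (0::real,0::real) (d,d)) = ennreal (d * d)"
    using d by (subst emeasure_lborel_box)
      (auto simp: Basis_prod_def prod.union_disjoint disjoint_iff)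
  ultimately show False using d by simp
qed

theorem proposition2p2:
  fixes p q :: real
  assumes "1 < p" and "1 < q"
  shows "\<exists>f :: real \<times> real \<Rightarrow> real.
           f \<in> borel_measurable lebesgue \<and>
           (AE x in lborel. in_Lip (1/p) (\<lambda>y. f (x, y))) \<and>
           (AE y in lborel. in_Lip (1/p) (\<lambda>x. f (x, y))) \<and>
           in_Lpq p q (\<lambda>x. lip_norm (1/p) (\<lambda>y. f (x, y))) \<and>
           in_Lpq p q (\<lambda>y. lip_norm (1/p) (\<lambda>x. f (x, y))) \<and>
           \<not> in_Linf f"
proof (intro exI conjI)
  have al: "0 < 1/p" "1/p \<le> 1" using assms by auto
  show "cross_spike \<in> borel_measurable lebesgue" by (rule borel_to_lebesgue[OF cross_spike_borel])
  show "AE x in lborel. in_Lip (1/p) (\<lambda>y. cross_spike (x, y))"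
    "AE y in lborel. in_Lip (1/p) (\<lambda>x. cross_spike (x, y))"
    unfolding cross_spike_sections using trunc_in_Lip[OF al spike_nonneg] by simp_all
  show "in_Lpq p q (\<lambda>x. lip_norm (1/p) (\<lambda>y. cross_spike (x, y)))"
    "in_Lpq p q (\<lambda>y. lip_norm (1/p) (\<lambda>x. cross_spike (x, y)))"
    unfolding cross_spike_sections lip_norm_trunc using section_norms_Lpq[OF assms] by simp_all
  show "\<not> in_Linf cross_spike" by (rule cross_spike_not_Linf)
qed

end
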